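(* Let $\mathcal{H}_1,\mathcal{H}_2$ be hyperplanes in a partial linear space with $\mathcal{H}_1\subseteq\mathcal{H}_2$. If $\mathcal{H}_2$ is spiky, then $\mathcal{H}_1=\mathcal{H}_2$.
   Context: A partial linear space is a pair $(S,\mathcal{L})$ where $\mathcal{L}$ is a family of subsets of $S$ (lines) such that every line has at least two points, every point lies on some line, and two distinct lines share at most one point. Points are collinear if some line contains both. A subspace is a set $X\subseteq S$ such that every line meeting $X$ in at least two points is contained in $X$; a hyperplane is a proper subspace meeting every line. A set $X$ is spiky if every point of $X$ is collinear with some point not in $X$. *)

theory Defs
  imports Main
begin

definition partial_linear_space :: "'a set \<Rightarrow> 'a set set \<Rightarrow> bool" where
  "partial_linear_space S L \<longleftrightarrow>
     (\<forall>l\<in>L. l \<subseteq> S \<and> (\<exists>x y. x \<in> l \<and> y \<in> l \<and> x \<noteq> y)) \<and>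
     (\<forall>p\<in>S. \<exists>l\<in>L. p \<in> l) \<and>
     (\<forall>l\<in>L. \<forall>m\<in>L. l \<noteq> m \<longrightarrow> (\<forall>x y. x \<in> l \<inter> m \<and> y \<in> l \<inter> m \<longrightarrow> x = y))"

definition collinear :: "'a set set \<Rightarrow> 'a \<Rightarrow> 'a \<Rightarrow> bool" where
  "collinear L p q \<longleftrightarrow> (\<exists>l\<in>L. p \<in> l \<and> q \<in> l)"

definition subspace :: "'a set \<Rightarrow> 'a set set \<Rightarrow> 'a set \<Rightarrow> bool" where
  "subspace S L X \<longleftrightarrow> X \<subseteq> S \<and>
     (\<forall>l\<in>L. (\<exists>x y. x \<in> l \<inter> X \<and> y \<in> l \<inter> X \<and> x \<noteq> y) \<longrightarrow> l \<subseteq> X)"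

definition hyperplane :: "'a set \<Rightarrow> 'a set set \<Rightarrow> 'a set \<Rightarrow> bool" where
  "hyperplane S L H \<longleftrightarrow> subspace S L H \<and> H \<noteq> S \<and> (\<forall>l\<in>L. l \<inter> H \<noteq> {})"

definition spiky :: "'a set \<Rightarrow> 'a set set \<Rightarrow> 'a set \<Rightarrow> bool" where
  "spiky S L X \<longleftrightarrow> (\<forall>x\<in>X. \<exists>y\<in>S - X. collinear L x y)"

end

theory Submission
  imports Defs
begin

text \<open>A line through a point x of H2 - H1 meets H1 in a second point of H2, so it lies in H2.
  Hence every point collinear with x lies in H2, which contradicts spikiness at x.\<close>

lemma subspace_line_subset:
  assumes "subspace S L X" "l \<in> L" "x \<in> l" "y \<in> l" "x \<in> X" "y \<in> X" "x \<noteq> y"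
  shows "l \<subseteq> X"
  using assms unfolding subspace_def by blast

lemma collinear_point_in_subspace:
  assumes sub: "subspace S L X"
    and block: "\<forall>l\<in>L. l \<inter> B \<noteq> {}" and "B \<subseteq> X"
    and x: "x \<in> X" "x \<notin> B"
    and "collinear L x y"
  shows "y \<in> X"
proof -
  obtain l where l: "l \<in> L" "x \<in> l" "y \<in> l"
    using \<open>collinear L x y\<close> unfolding collinear_def by blast
  then obtain z where z: "z \<in> l" "z \<in> B" using block by blast
  have "l \<subseteq> X"
    using subspace_line_subset[OF sub l(1,2) z(1) x(1)] z x \<open>B \<subseteq> X\<close> by blast
  then show ?thesis using l(3) by blast
qed

theorem lemma1p4:
  assumes "partial_linear_space S L"
    and "hyperplane S L H1" and "hyperplane S L H2"
    and "H1 \<subseteq> H2"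
    and "spiky S L H2"
  shows "H1 = H2"
proof (rule ccontr)
  assume "H1 \<noteq> H2"
  then obtain x where x: "x \<in> H2" "x \<notin> H1" using assms(4) by blast
  then obtain y where y: "y \<in> S - H2" "collinear L x y"
    using assms(5) unfolding spiky_def by blast
  have "y \<in> H2"
    using collinear_point_in_subspace[OF _ _ assms(4) x y(2)] assms(2,3)
    unfolding hyperplane_def by blast
  with y(1) show False by blast
qed

end
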